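(* In the Core Tuplix Calculus $\mathbf{CTC}$ over a nonempty attribute set $A$ and a non-trivial cancellation meadow $\mathcal{D}$ (defined in the context), the following two rules are derivable: (i) for all data terms $p,q$, every data variable $u$ and every tuplix term $t$, if $\mathcal{D}\models p=q$ then $\mathbf{CTC}\vdash t[p/u]=t[q/u]$; (ii) for every tuplix term $t$, data variable $u$ and data term $p$, $\mathbf{CTC}\vdash t\oplus\gamma(u-p)=t[p/u]\oplus\gamma(u-p)$. Here $t[p/u]$ denotes replacement of all occurrences of the data variable $u$ in $t$ by $p$.
   Context: Data: a meadow is a commutative ring with unit with a total unary operation $(\cdot)^{-1}$ satisfying $(u^{-1})^{-1}=u$ and $u\cdot(u\cdot u^{-1})=u$; a non-trivial cancellation meadow additionally satisfies $0\neq 1$ and the cancellation law ($u\neq 0$ and $uv=uw$ imply $v=w$). Fix such a structure $\mathcal{D}$. Data terms are built from data variables, constants $0,1$, binary $+,\cdot$ and unary $-$, $(\cdot)^{-1}$; write $p/q$ for $p\cdot q^{-1}$ and $p-q$ for $p+(-q)$; $\mathcal{D}\models p=q$ means the identity holds for all valuations in $\mathcal{D}$. Fix a nonempty set $A$ of attributes. Tuplix terms are built from tuplix variables, constants $\epsilon$ and $\delta$, entries $a(p)$ ($a\in A$, $p$ a data term), zero tests $\gamma(p)$, and the binary operator $\oplus$. $\mathbf{CTC}$ is the two-sorted equational proof system with axioms (T1) $x\oplus y=y\oplus x$; (T2) $(x\oplus y)\oplus z=x\oplus(y\oplus z)$; (T3) $x\oplus\epsilon=x$; (T4) $x\oplus\delta=\delta$;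 (T5) $a(u)\oplus a(v)=a(u+v)$; (T6) $\gamma(u)=\gamma(u/u)$; (T7) $\gamma(0)=\epsilon$; (T8) $\gamma(1)=\delta$; (T9) $\gamma(u)\oplus\gamma(v)=\gamma(u/u+v/v)$; (T10) $\gamma(u-v)\oplus a(u)=\gamma(u-v)\oplus a(v)$ (for all $a\in A$), together with the rule (DE): for all data terms $p,q$, if $\mathcal{D}\models p=q$ then $\gamma(p)=\gamma(q)$ is derivable. *)

theory Defs
  imports Main
begin

record 'd meadow_ops =
  mzero :: 'd
  mone  :: 'd
  madd  :: "'d \<Rightarrow> 'd \<Rightarrow> 'd"
  mmul  :: "'d \<Rightarrow> 'd \<Rightarrow> 'd"
  mneg  :: "'d \<Rightarrow> 'd"
  minv  :: "'d \<Rightarrow> 'd"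

definition meadow :: "'d meadow_ops \<Rightarrow> bool" where
  "meadow M \<longleftrightarrow>
     (\<forall>x y z. madd M (madd M x y) z = madd M x (madd M y z)) \<and>
     (\<forall>x y. madd M x y = madd M y x) \<and>
     (\<forall>x. madd M x (mzero M) = x) \<and>
     (\<forall>x. madd M x (mneg M x) = mzero M) \<and>
     (\<forall>x y z. mmul M (mmul M x y) z = mmul M x (mmul M y z)) \<and>
     (\<forall>x y. mmul M x y = mmul M y x) \<and>
     (\<forall>x. mmul M x (mone M) = x) \<and>
     (\<forall>x y z. mmul M x (madd M y z) = madd M (mmul M x y) (mmul M x z)) \<and>
     (\<forall>x. minv M (minv M x) = x) \<and>
     (\<forall>x. mmul M x (mmul M x (minv M x)) = x)"

definition nt_cancellation_meadow :: "'d meadow_ops \<Rightarrow> bool" where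
  "nt_cancellation_meadow M \<longleftrightarrow>
     meadow M \<and> mzero M \<noteq> mone M \<and>
     (\<forall>x y z. x \<noteq> mzero M \<longrightarrow> mmul M x y = mmul M x z \<longrightarrow> y = z)"

datatype dterm =
    DVar nat
  | DZero
  | DOne
  | DAdd dterm dterm
  | DMul dterm dterm
  | DNeg dterm
  | DInv dterm

definition DDiv :: "dterm \<Rightarrow> dterm \<Rightarrow> dterm" where
  "DDiv p q = DMul p (DInv q)"

definition DSub :: "dterm \<Rightarrow> dterm \<Rightarrow> dterm" where
  "DSub p q = DAdd p (DNeg q)"

fun deval :: "'d meadow_ops \<Rightarrow> (nat \<Rightarrow> 'd) \<Rightarrow> dterm \<Rightarrow> 'd" where
  "deval M \<rho> (DVar n) = \<rho> n"
| "deval M \<rho> DZero = mzero M"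
| "deval M \<rho> DOne = mone M"
| "deval M \<rho> (DAdd p q) = madd M (deval M \<rho> p) (deval M \<rho> q)"
| "deval M \<rho> (DMul p q) = mmul M (deval M \<rho> p) (deval M \<rho> q)"
| "deval M \<rho> (DNeg p) = mneg M (deval M \<rho> p)"
| "deval M \<rho> (DInv p) = minv M (deval M \<rho> p)"

definition dvalid :: "'d meadow_ops \<Rightarrow> dterm \<Rightarrow> dterm \<Rightarrow> bool" where
  "dvalid M p q \<longleftrightarrow> (\<forall>\<rho>. deval M \<rho> p = deval M \<rho> q)"

fun dsubst :: "nat \<Rightarrow> dterm \<Rightarrow> dterm \<Rightarrow> dterm" where
  "dsubst u p (DVar n) = (if n = u then p else DVar n)"
| "dsubst u p DZero = DZero"
| "dsubst u p DOne = DOne"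
| "dsubst u p (DAdd a b) = DAdd (dsubst u p a) (dsubst u p b)"
| "dsubst u p (DMul a b) = DMul (dsubst u p a) (dsubst u p b)"
| "dsubst u p (DNeg a) = DNeg (dsubst u p a)"
| "dsubst u p (DInv a) = DInv (dsubst u p a)"

datatype 'a tterm =
    TVar nat
  | Eps
  | Delta
  | Ent 'a dterm
  | Gam dterm
  | Oplus "'a tterm" "'a tterm"

fun tsubst :: "nat \<Rightarrow> dterm \<Rightarrow> 'a tterm \<Rightarrow> 'a tterm" where
  "tsubst u p (TVar n) = TVar n"
| "tsubst u p Eps = Eps"
| "tsubst u p Delta = Delta"
| "tsubst u p (Ent a q) = Ent a (dsubst u p q)"
| "tsubst u p (Gam q) = Gam (dsubst u p q)"
| "tsubst u p (Oplus s t) = Oplus (tsubst u p s) (tsubst u p t)"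

text \<open>Derivable tuplix equations: all substitution instances of the axioms
  T1--T10, the rule DE, and the rules of equational logic (reflexivity, symmetry,
  transitivity, congruence w.r.t. the only tuplix-sorted operator \<open>\<oplus>\<close>).\<close>
inductive ctc :: "'d meadow_ops \<Rightarrow> 'a tterm \<Rightarrow> 'a tterm \<Rightarrow> bool" for M where
  T1: "ctc M (Oplus x y) (Oplus y x)"
| T2: "ctc M (Oplus (Oplus x y) z) (Oplus x (Oplus y z))"
| T3: "ctc M (Oplus x Eps) x"
| T4: "ctc M (Oplus x Delta) Delta"
| T5: "ctc M (Oplus (Ent a u) (Ent a v)) (Ent a (DAdd u v))"
| T6: "ctc M (Gam u) (Gam (DDiv u u))"
| T7: "ctc M (Gam DZero) Eps"
| T8: "ctc M (Gam DOne) Delta"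
| T9: "ctc M (Oplus (Gam u) (Gam v)) (Gam (DAdd (DDiv u u) (DDiv v v)))"
| T10: "ctc M (Oplus (Gam (DSub u v)) (Ent a u)) (Oplus (Gam (DSub u v)) (Ent a v))"
| DE: "dvalid M p q \<Longrightarrow> ctc M (Gam p) (Gam q)"
| refl: "ctc M t t"
| sym: "ctc M s t \<Longrightarrow> ctc M t s"
| trans: "ctc M s t \<Longrightarrow> ctc M t r \<Longrightarrow> ctc M s r"
| cong: "ctc M s s' \<Longrightarrow> ctc M t t' \<Longrightarrow> ctc M (Oplus s t) (Oplus s' t')"

end

theory Submission
  imports Defs
begin

text \<open>In a cancellation meadow \<open>a/a\<close> is \<open>0\<close> for \<open>a = 0\<close> and \<open>1\<close> otherwise, so
  \<open>\<gamma>(p) \<oplus> \<gamma>(q)\<close> is the zero test of the data term \<open>(p/p + q/q)/(p/p + q/q)\<close>, which detects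
  whether \<open>p\<close> or \<open>q\<close> is nonzero, provided \<open>1 + 1 \<noteq> 0\<close>.  Rule (i) follows from (DE) for zero
  tests and from (T10) with the guard \<open>\<gamma>(p - q) = \<gamma>(0) = \<epsilon>\<close> for entries.  For rule (ii), under
  the guard \<open>\<gamma>(u - p)\<close> the data identity \<open>u = p\<close> may be assumed: a zero test \<open>\<gamma>(r)\<close> merges
  with the guard into a single zero test whose value does not change when \<open>u\<close> is replaced by
  \<open>p\<close>, and the guard absorbs \<open>\<gamma>(r - r[p/u])\<close>, which by (T10) lets an entry \<open>a(r)\<close> become
  \<open>a(r[p/u])\<close>.  In characteristic 2 the calculus is trivial, since then
  \<open>\<epsilon> = \<gamma>(0) = \<gamma>(1/1 + 1/1) = \<gamma>(1) \<oplus> \<gamma>(1) = \<delta>\<close>.\<close>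

declare ctc.trans[trans]

lemma ctc_guard_transfer:
  assumes absorb: "ctc M g (Oplus g h)"
    and swap: "ctc M (Oplus h s) (Oplus h s')"
  shows "ctc M (Oplus s g) (Oplus s' g)"
proof -
  have "ctc M (Oplus s g) (Oplus s (Oplus g h))" by (rule ctc.cong[OF ctc.refl absorb])
  also have "ctc M \<dots> (Oplus (Oplus g h) s)" by (rule ctc.T1)
  also have "ctc M \<dots> (Oplus g (Oplus h s))" by (rule ctc.T2)
  also have "ctc M \<dots> (Oplus g (Oplus h s'))" by (rule ctc.cong[OF ctc.refl swap])
  also have "ctc M \<dots> (Oplus (Oplus g h) s')" by (rule ctc.sym[OF ctc.T2])
  also have "ctc M \<dots> (Oplus s' (Oplus g h))" by (rule ctc.T1)
  also have "ctc M \<dots> (Oplus s' g)" by (rule ctc.cong[OF ctc.refl ctc.sym[OF absorb]])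
  finally show ?thesis .
qed

lemma ctc_guarded_Oplus:
  assumes s: "ctc M (Oplus s g) (Oplus s' g)"
    and t: "ctc M (Oplus t g) (Oplus t' g)"
  shows "ctc M (Oplus (Oplus s t) g) (Oplus (Oplus s' t') g)"
proof -
  have "ctc M (Oplus (Oplus s t) g) (Oplus s (Oplus t g))" by (rule ctc.T2)
  also have "ctc M \<dots> (Oplus s (Oplus t' g))" by (rule ctc.cong[OF ctc.refl t])
  also have "ctc M \<dots> (Oplus (Oplus s t') g)" by (rule ctc.sym[OF ctc.T2])
  also have "ctc M \<dots> (Oplus (Oplus t' s) g)" by (rule ctc.cong[OF ctc.T1 ctc.refl])
  also have "ctc M \<dots> (Oplus t' (Oplus s g))" by (rule ctc.T2)
  also have "ctc M \<dots> (Oplus t' (Oplus s' g))" by (rule ctc.cong[OF ctc.refl s])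
  also have "ctc M \<dots> (Oplus (Oplus t' s') g)" by (rule ctc.sym[OF ctc.T2])
  also have "ctc M \<dots> (Oplus (Oplus s' t') g)" by (rule ctc.cong[OF ctc.T1 ctc.refl])
  finally show ?thesis .
qed

definition DJoin :: "dterm \<Rightarrow> dterm \<Rightarrow> dterm" where
  "DJoin p q = DDiv (DAdd (DDiv p p) (DDiv q q)) (DAdd (DDiv p p) (DDiv q q))"

lemma ctc_Oplus_Gam: "ctc M (Oplus (Gam p) (Gam q)) (Gam (DJoin p q))"
  unfolding DJoin_def using ctc.T9 ctc.T6 by (rule ctc.trans)

lemma ctc_trivial:
  fixes s t :: "'a tterm"
  assumes "dvalid M DZero (DAdd (DDiv DOne DOne) (DDiv DOne DOne))"
  shows "ctc M s t"
proof -
  have "ctc M (Eps :: 'a tterm) (Gam DZero)" by (rule ctc.sym[OF ctc.T7])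
  also have "ctc M \<dots> (Gam (DAdd (DDiv DOne DOne) (DDiv DOne DOne)))" by (rule ctc.DE[OF assms])
  also have "ctc M \<dots> (Oplus (Gam DOne) (Gam DOne))" by (rule ctc.sym[OF ctc.T9])
  also have "ctc M \<dots> (Oplus Delta Delta)" by (rule ctc.cong[OF ctc.T8 ctc.T8])
  also have "ctc M \<dots> Delta" by (rule ctc.T4)
  finally have eps_delta: "ctc M (Eps :: 'a tterm) Delta" .
  have to_delta: "ctc M x Delta" for x :: "'a tterm"
  proof -
    have "ctc M x (Oplus x Eps)" by (rule ctc.sym[OF ctc.T3])
    also have "ctc M \<dots> (Oplus x Delta)" by (rule ctc.cong[OF ctc.refl eps_delta])
    also have "ctc M \<dots> Delta" by (rule ctc.T4)
    finally show ?thesis .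
  qed
  show ?thesis using to_delta[of s] ctc.sym[OF to_delta[of t]] by (rule ctc.trans)
qed

lemma deval_dsubst: "deval M \<rho> (dsubst u p r) = deval M (\<rho>(u := deval M \<rho> p)) r"
  by (induction r) auto

lemma dvalid_dsubst: "dvalid M p q \<Longrightarrow> dvalid M (dsubst u p r) (dsubst u q r)"
  by (simp add: dvalid_def deval_dsubst)

lemma ctc_Ent_dvalid:
  assumes "meadow M" and "dvalid M q q'"
  shows "ctc M (Ent a q) (Ent a q')"
proof -
  have "dvalid M (DSub q q') DZero"
    using assms unfolding meadow_def dvalid_def DSub_def by simp
  then have "ctc M (Gam (DSub q q')) Eps" using ctc.trans[OF ctc.DE ctc.T7] by blast
  then have "ctc M Eps (Oplus Eps (Gam (DSub q q')))"
    by (metis ctc.T1 ctc.T3 ctc.sym ctc.trans)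
  then have "ctc M (Oplus (Ent a q) Eps) (Oplus (Ent a q') Eps)"
    using ctc.T10 by (rule ctc_guard_transfer)
  then show ?thesis by (metis ctc.T3 ctc.sym ctc.trans)
qed

lemma ctc_tsubst_dvalid:
  assumes "meadow M" and "dvalid M p q"
  shows "ctc M (tsubst u p t) (tsubst u q t)"
proof (induction t)
  case (Ent a r)
  show ?case using ctc_Ent_dvalid[OF assms(1) dvalid_dsubst[OF assms(2)]] by simp
next
  case (Gam r)
  show ?case using ctc.DE[OF dvalid_dsubst[OF assms(2)]] by simp
qed (auto intro: ctc.refl ctc.cong)

definition zero_test :: "'d meadow_ops \<Rightarrow> 'd \<Rightarrow> 'd" where
  "zero_test M a = mmul M a (minv M a)"

lemma deval_DDiv_self: "deval M \<rho> (DDiv p p) = zero_test M (deval M \<rho> p)"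
  by (simp add: DDiv_def zero_test_def)

lemma deval_DJoin:
  "deval M \<rho> (DJoin p q) = zero_test M (madd M (zero_test M (deval M \<rho> p)) (zero_test M (deval M \<rho> q)))"
  by (simp add: DJoin_def DDiv_def zero_test_def)

locale cancellation_meadow =
  fixes M :: "'d meadow_ops"
  assumes nt_cancellation_meadow: "nt_cancellation_meadow M"
begin

lemma meadow: "meadow M"
  using nt_cancellation_meadow unfolding nt_cancellation_meadow_def by blast

lemma zero_ne_one: "mzero M \<noteq> mone M"
  using nt_cancellation_meadow unfolding nt_cancellation_meadow_def by blast

lemma add_zero_left: "madd M (mzero M) x = x"
  using meadow unfolding meadow_def by metis

lemma sub_eq_zero_iff: "madd M x (mneg M y) = mzero M \<longleftrightarrow> x = y"
proof
  assume diff: "madd M x (mneg M y) = mzero M"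
  have "x = madd M x (madd M (mneg M y) y)"
    using meadow unfolding meadow_def by metis
  also have "\<dots> = y"
    using meadow diff add_zero_left unfolding meadow_def by metis
  finally show "x = y" .
qed (use meadow in \<open>simp add: meadow_def\<close>)

lemma mul_zero: "mmul M a (mzero M) = mzero M"
proof -
  have ax: "\<forall>x y z. madd M (madd M x y) z = madd M x (madd M y z)"
    "\<forall>x. madd M x (mzero M) = x" "\<forall>x. madd M x (mneg M x) = mzero M"
    "\<forall>x y z. mmul M x (madd M y z) = madd M (mmul M x y) (mmul M x z)"
    using meadow unfolding meadow_def by blast+
  define b where "b = mmul M a (mzero M)"
  have double: "madd M b b = b" using ax(2,4) by (metis b_def)
  have "mzero M = madd M (madd M b b) (mneg M b)" using double ax(3) by simp
  also have "\<dots> = b" using ax(1-3) by metis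
  finally show ?thesis by (simp add: b_def)
qed

lemma zero_test_zero: "zero_test M (mzero M) = mzero M"
  using meadow mul_zero unfolding zero_test_def meadow_def by metis

lemma zero_test_nonzero: "a \<noteq> mzero M \<Longrightarrow> zero_test M a = mone M"
  using nt_cancellation_meadow
  unfolding zero_test_def nt_cancellation_meadow_def meadow_def by metis

lemma zero_test_join:
  assumes "madd M (mone M) (mone M) \<noteq> mzero M"
  shows "zero_test M (madd M (zero_test M a) (zero_test M b)) =
           (if a = mzero M \<and> b = mzero M then mzero M else mone M)"
proof (cases "a = mzero M \<and> b = mzero M")
  case True
  then show ?thesis using zero_test_zero add_zero_left by simp
next
  case False
  have "madd M (zero_test M a) (zero_test M b) \<noteq> mzero M"
    using False assms zero_ne_one add_zero_left meadow zero_test_zero zero_test_nonzero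
    unfolding meadow_def by metis
  then show ?thesis using False zero_test_nonzero by auto
qed

lemma char_two_trivial:
  assumes "madd M (mone M) (mone M) = mzero M"
  shows "dvalid M DZero (DAdd (DDiv DOne DOne) (DDiv DOne DOne))"
  using assms zero_ne_one zero_test_nonzero by (simp add: dvalid_def deval_DDiv_self)

lemma deval_dsubst_guard:
  assumes "deval M \<rho> (DSub (DVar u) p) = mzero M"
  shows "deval M \<rho> (dsubst u p r) = deval M \<rho> r"
proof -
  have "\<rho>(u := deval M \<rho> p) = \<rho>"
    using assms sub_eq_zero_iff by (auto simp: DSub_def)
  then show ?thesis by (simp add: deval_dsubst)
qed

context
  fixes u :: nat and p :: dterm
  assumes char_ne_two: "madd M (mone M) (mone M) \<noteq> mzero M"
begin

lemma ctc_guard_absorbs: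
  "ctc M (Gam (DSub (DVar u) p)) (Oplus (Gam (DSub (DVar u) p)) (Gam (DSub r (dsubst u p r))))"
  (is "ctc M (Gam ?x) (Oplus (Gam ?x) (Gam ?z))")
proof -
  have "dvalid M (DDiv ?x ?x) (DJoin ?x ?z)"
    unfolding dvalid_def
  proof
    fix \<rho>
    show "deval M \<rho> (DDiv ?x ?x) = deval M \<rho> (DJoin ?x ?z)"
    proof (cases "deval M \<rho> ?x = mzero M")
      case True
      then have "deval M \<rho> ?z = mzero M"
        using deval_dsubst_guard sub_eq_zero_iff by (simp add: DSub_def)
      then show ?thesis
        using True zero_test_join[OF char_ne_two, of "deval M \<rho> ?x" "deval M \<rho> ?z"]
        by (simp add: deval_DJoin deval_DDiv_self zero_test_zero)
    next
      case False
      then show ?thesis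
        using zero_test_join[OF char_ne_two, of "deval M \<rho> ?x" "deval M \<rho> ?z"] zero_test_nonzero
        by (simp add: deval_DJoin deval_DDiv_self)
    qed
  qed
  then have "ctc M (Gam ?x) (Gam (DJoin ?x ?z))" by (rule ctc.trans[OF ctc.T6 ctc.DE])
  then show ?thesis using ctc.sym[OF ctc_Oplus_Gam] by (rule ctc.trans)
qed

lemma ctc_guarded_tsubst:
  "ctc M (Oplus t (Gam (DSub (DVar u) p))) (Oplus (tsubst u p t) (Gam (DSub (DVar u) p)))"
proof (induction t)
  case (Ent a r)
  show ?case using ctc_guard_transfer[OF ctc_guard_absorbs ctc.T10] by simp
next
  case (Gam r)
  let ?x = "DSub (DVar u) p"
  have "dvalid M (DJoin r ?x) (DJoin (dsubst u p r) ?x)"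
    unfolding dvalid_def
  proof
    fix \<rho>
    show "deval M \<rho> (DJoin r ?x) = deval M \<rho> (DJoin (dsubst u p r) ?x)"
      using deval_dsubst_guard[of \<rho> u p r]
      by (cases "deval M \<rho> ?x = mzero M") (simp_all add: deval_DJoin zero_test_join[OF char_ne_two])
  qed
  then have "ctc M (Oplus (Gam r) (Gam ?x)) (Gam (DJoin (dsubst u p r) ?x))"
    by (rule ctc.trans[OF ctc_Oplus_Gam ctc.DE])
  from ctc.trans[OF this ctc.sym[OF ctc_Oplus_Gam]] show ?case by simp
next
  case (Oplus s t)
  then show ?case by (simp add: ctc_guarded_Oplus)
qed (auto intro: ctc.refl)

end

end

theorem mainTheorem4:
  fixes M :: "'d meadow_ops"
  assumes "nt_cancellation_meadow M"
  shows "(\<forall>(p::dterm) q u (t::'a tterm). dvalid M p q \<longrightarrow> ctc M (tsubst u p t) (tsubst u q t))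
       \<and> (\<forall>(t::'a tterm) u p. ctc M (Oplus t (Gam (DSub (DVar u) p)))
                                     (Oplus (tsubst u p t) (Gam (DSub (DVar u) p))))"
proof -
  interpret cancellation_meadow M by (rule cancellation_meadow.intro[OF assms])
  show ?thesis
  proof (cases "madd M (mone M) (mone M) = mzero M")
    case True
    then show ?thesis using ctc_trivial[OF char_two_trivial] by blast
  next
    case False
    then show ?thesis using ctc_tsubst_dvalid[OF meadow] ctc_guarded_tsubst by blast
  qed
qed

end
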